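(* Suppose $\|\mu_a\|_\infty,\|\widehat\mu_a\|_\infty\le B<\infty$ a.s. for all $a$, and $\mathbb{P}\{\epsilon\le\widehat\pi_a(X)\le1-\epsilon\}=1$ for some $\epsilon>0$ and all $a$. Then for any $a\in\mathcal{A}$, $$\mathbb{P}\{\varphi_{2,a}(\widehat\eta)-\varphi_{2,a}(\eta)\}\lesssim\|\widehat\mu_a-\mu_a\|\big(\|\widehat\mu_a-\mu_a\|+\|\widehat\pi_a-\pi_a\|\big).$$
   Context: $Z=(Y,A,X)\sim\mathbb{P}$, $A\in\mathcal{A}=\{1,\dots,p\}$. $\mu_a(X)=\mathbb{E}(Y\mid X,A=a)$, $\pi_a(X)=\mathbb{P}(A=a\mid X)$, $\eta=\{\pi_a,\mu_a\}_a$; $\widehat\eta=\{\widehat\pi_a,\widehat\mu_a\}_a$ are estimators held fixed under $\mathbb{P}$. $\varphi_{2,a}(Z;\eta)=2\mu_a(X)\frac{\mathbb{1}(A=a)}{\pi_a(X)}\{Y-\mu_A(X)\}+\mu_a^2(X)$ (and $\varphi_{2,a}(\widehat\eta)$ the same with $\widehat\mu,\widehat\pi$ in place of $\mu,\pi$). $\|f\|=(\int f^2d\mathbb{P})^{1/2}$ is the $L_2(\mathbb{P})$ norm; $\lesssim$ inequality up to a multiplicative constant. *)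

theory Defs
  imports "HOL-Probability.Probability"
begin

definition phi2 :: "(nat \<Rightarrow> 'x \<Rightarrow> real) \<Rightarrow> (nat \<Rightarrow> 'x \<Rightarrow> real) \<Rightarrow> nat
    \<Rightarrow> real \<Rightarrow> nat \<Rightarrow> 'x \<Rightarrow> real" where
  "phi2 \<pi> mu a y aa x =
     2 * mu a x * (of_bool (aa = a) / \<pi> a x) * (y - mu aa x) + (mu a x)\<^sup>2"

definition L2X :: "'w measure \<Rightarrow> ('w \<Rightarrow> 'x) \<Rightarrow> ('x \<Rightarrow> real) \<Rightarrow> real" where
  "L2X M X f = sqrt (\<integral>\<omega>. (f (X \<omega>))\<^sup>2 \<partial>M)"

text \<open>The data-generating model: Z = (Y, A, X) on the probability space M,
  A takes values in {1..p}, mu_a(X) = E(Y | X, A = a) and pi_a(X) = P(A = a | X),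
  expressed through the library's conditional expectation.\<close>
definition nuisance_model ::
  "'w measure \<Rightarrow> 'x measure \<Rightarrow> ('w \<Rightarrow> 'x) \<Rightarrow> ('w \<Rightarrow> nat) \<Rightarrow> ('w \<Rightarrow> real) \<Rightarrow> nat
   \<Rightarrow> (nat \<Rightarrow> 'x \<Rightarrow> real) \<Rightarrow> (nat \<Rightarrow> 'x \<Rightarrow> real) \<Rightarrow> bool" where
  "nuisance_model M MX X A Y p mu \<pi> \<longleftrightarrow>
     prob_space M \<and>
     X \<in> measurable M MX \<and> A \<in> measurable M (count_space UNIV) \<and>
     Y \<in> borel_measurable M \<and> integrable M Y \<and>
     (\<forall>\<omega>\<in>space M. A \<omega> \<in> {1..p}) \<and>
     (\<forall>a\<in>{1..p}. mu a \<in> borel_measurable MX \<and> \<pi> a \<in> borel_measurable MX) \<and>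
     (AE \<omega> in M. mu (A \<omega>) (X \<omega>) =
        real_cond_exp M (vimage_algebra (space M) (\<lambda>\<omega>. (X \<omega>, A \<omega>)) (MX \<Otimes>\<^sub>M count_space UNIV)) Y \<omega>) \<and>
     (\<forall>a\<in>{1..p}. AE \<omega> in M. \<pi> a (X \<omega>) =
        real_cond_exp M (vimage_algebra (space M) X MX) (indicator {\<omega>\<in>space M. A \<omega> = a}) \<omega>)"

end

theory Submission
  imports Defs
begin

text \<open>Pointwise, phi2(\<eta>h) - phi2(\<eta>) is 2 1(A = a) h(X) (Y - mu_a(X)) plus a function of (X, A).
  The first term has mean zero because mu_A(X) = E(Y | X, A); conditioning the second on X
  replaces 1(A = a) by \<pi>_a(X). In the resulting conditional bias the terms linear in
  muh_a - mu_a cancel, leaving -(muh_a - mu_a)^2 + 2 (muh_a - mu_a) (muh_a / \<pi>h_a) (\<pi>h_a - \<pi>_a),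
  which is at most (2B/\<epsilon>) |muh_a - mu_a| |\<pi>h_a - \<pi>_a|; Cauchy-Schwarz bounds its mean.\<close>

lemma integrable_abs_mult_of_square_integrable:
  fixes f g :: "'a \<Rightarrow> real"
  assumes [measurable]: "f \<in> borel_measurable M" "g \<in> borel_measurable M"
    and "integrable M (\<lambda>x. (f x)\<^sup>2)" "integrable M (\<lambda>x. (g x)\<^sup>2)"
  shows "integrable M (\<lambda>x. \<bar>f x\<bar> * \<bar>g x\<bar>)"
proof (rule Bochner_Integration.integrable_bound)
  show "integrable M (\<lambda>x. (f x)\<^sup>2 + (g x)\<^sup>2)"
    using assms(3,4) by (rule Bochner_Integration.integrable_add)
  have "\<bar>f x\<bar> * \<bar>g x\<bar> \<le> (f x)\<^sup>2 + (g x)\<^sup>2" for x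
    using sum_squares_bound[of "\<bar>f x\<bar>" "\<bar>g x\<bar>"] abs_ge_zero[of "f x * g x"]
    by (simp only: mult.assoc abs_mult power2_abs)
  then show "AE x in M. norm (\<bar>f x\<bar> * \<bar>g x\<bar>) \<le> norm ((f x)\<^sup>2 + (g x)\<^sup>2)"
    by simp
qed measurable

lemma Cauchy_Schwarz_integral:
  fixes f g :: "'a \<Rightarrow> real"
  assumes [measurable]: "f \<in> borel_measurable M" "g \<in> borel_measurable M"
    and f2: "integrable M (\<lambda>x. (f x)\<^sup>2)" and g2: "integrable M (\<lambda>x. (g x)\<^sup>2)"
  shows "(\<integral>x. \<bar>f x\<bar> * \<bar>g x\<bar> \<partial>M) \<le> sqrt (\<integral>x. (f x)\<^sup>2 \<partial>M) * sqrt (\<integral>x. (g x)\<^sup>2 \<partial>M)"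
proof -
  have fg: "integrable M (\<lambda>x. \<bar>f x\<bar> * \<bar>g x\<bar>)"
    using integrable_abs_mult_of_square_integrable[OF assms] .
  have "(\<integral>\<^sup>+x. ennreal \<bar>f x\<bar> * ennreal \<bar>g x\<bar> \<partial>M)\<^sup>2
      \<le> (\<integral>\<^sup>+x. (ennreal \<bar>f x\<bar>)\<^sup>2 \<partial>M) * (\<integral>\<^sup>+x. (ennreal \<bar>g x\<bar>)\<^sup>2 \<partial>M)"
    by (rule Cauchy_Schwarz_nn_integral) auto
  also have "(\<lambda>x. ennreal \<bar>f x\<bar> * ennreal \<bar>g x\<bar>) = (\<lambda>x. ennreal (\<bar>f x\<bar> * \<bar>g x\<bar>))"
    by (auto simp: ennreal_mult'')
  also have "(\<lambda>x. (ennreal \<bar>f x\<bar>)\<^sup>2) = (\<lambda>x. ennreal ((f x)\<^sup>2))"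
    by (auto simp: ennreal_power)
  also have "(\<lambda>x. (ennreal \<bar>g x\<bar>)\<^sup>2) = (\<lambda>x. ennreal ((g x)\<^sup>2))"
    by (auto simp: ennreal_power)
  also have "(\<integral>\<^sup>+x. ennreal (\<bar>f x\<bar> * \<bar>g x\<bar>) \<partial>M) = ennreal (\<integral>x. \<bar>f x\<bar> * \<bar>g x\<bar> \<partial>M)"
    by (rule nn_integral_eq_integral[OF fg]) auto
  also have "(\<integral>\<^sup>+x. ennreal ((f x)\<^sup>2) \<partial>M) = ennreal (\<integral>x. (f x)\<^sup>2 \<partial>M)"
    by (rule nn_integral_eq_integral[OF f2]) auto
  also have "(\<integral>\<^sup>+x. ennreal ((g x)\<^sup>2) \<partial>M) = ennreal (\<integral>x. (g x)\<^sup>2 \<partial>M)"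
    by (rule nn_integral_eq_integral[OF g2]) auto
  finally have "(ennreal (\<integral>x. \<bar>f x\<bar> * \<bar>g x\<bar> \<partial>M))\<^sup>2
      \<le> ennreal (\<integral>x. (f x)\<^sup>2 \<partial>M) * ennreal (\<integral>x. (g x)\<^sup>2 \<partial>M)" .
  then have "(\<integral>x. \<bar>f x\<bar> * \<bar>g x\<bar> \<partial>M)\<^sup>2 \<le> (\<integral>x. (f x)\<^sup>2 \<partial>M) * (\<integral>x. (g x)\<^sup>2 \<partial>M)"
    by (simp add: ennreal_power ennreal_mult''[symmetric] ennreal_le_iff integral_nonneg_AE)
  then show ?thesis
    by (simp add: real_le_rsqrt real_sqrt_mult[symmetric])
qed

lemma L2X_nonneg: "0 \<le> L2X M X f"
  unfolding L2X_def by simp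

lemma (in finite_measure) sigma_finite_subalgebra_vimage_algebra:
  assumes "G \<in> measurable M N"
  shows "sigma_finite_subalgebra M (vimage_algebra (space M) G N)"
proof -
  have "subalgebra M (vimage_algebra (space M) G N)"
    unfolding subalgebra_def using assms by (simp add: measurable_iff_sets)
  then interpret finite_measure_subalgebra M "vimage_algebra (space M) G N"
    by unfold_locales
  show ?thesis
    by (rule sigma_finite_subalgebra_axioms)
qed

lemma measurable_comp_vimage_algebra:
  assumes "G \<in> measurable M N" "h \<in> measurable N K"
  shows "(\<lambda>\<omega>. h (G \<omega>)) \<in> measurable (vimage_algebra (space M) G N) K"
  using measurable_comp[OF measurable_vimage_algebra1 assms(2), of G "space M"]
    measurable_space[OF assms(1)]
  by (auto simp: o_def)

lemma (in sigma_finite_subalgebra) real_cond_exp_residual_orthogonal: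
  assumes Y: "integrable M Y" and [measurable]: "k \<in> borel_measurable F"
    and kY: "integrable M (\<lambda>\<omega>. k \<omega> * (Y \<omega> - real_cond_exp M F Y \<omega>))"
  shows "(\<integral>\<omega>. k \<omega> * (Y \<omega> - real_cond_exp M F Y \<omega>) \<partial>M) = 0"
proof -
  have [measurable]: "Y \<in> borel_measurable M"
    using Y by (rule borel_measurable_integrable)
  have cY: "integrable M (real_cond_exp M F Y)"
    using Y by (rule real_cond_exp_int(1))
  have "AE \<omega> in M. real_cond_exp M F (\<lambda>\<omega>. Y \<omega> - real_cond_exp M F Y \<omega>) \<omega> = 0"
    using real_cond_exp_diff[OF Y cY] real_cond_exp_F_meas[OF cY borel_measurable_cond_exp]
    by eventually_elim simp
  then have "(\<integral>\<omega>. k \<omega> * real_cond_exp M F (\<lambda>\<omega>. Y \<omega> - real_cond_exp M F Y \<omega>) \<omega> \<partial>M) = 0"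
    by (subst integral_cong_AE[where g = "\<lambda>_. 0"]) (auto intro: measurable_from_subalg[OF subalg])
  then show ?thesis
    using real_cond_exp_intg(2)[OF kY] by simp
qed

lemma nuisance_modelD:
  assumes "nuisance_model M MX X A Y p mu \<pi>"
  shows "prob_space M"
    and "X \<in> measurable M MX" "A \<in> measurable M (count_space UNIV)"
    and "Y \<in> borel_measurable M" "integrable M Y"
    and "a \<in> {1..p} \<Longrightarrow> mu a \<in> borel_measurable MX"
    and "a \<in> {1..p} \<Longrightarrow> \<pi> a \<in> borel_measurable MX"
    and "AE \<omega> in M. mu (A \<omega>) (X \<omega>) =
      real_cond_exp M (vimage_algebra (space M) (\<lambda>\<omega>. (X \<omega>, A \<omega>)) (MX \<Otimes>\<^sub>M count_space UNIV)) Y \<omega>"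
    and "a \<in> {1..p} \<Longrightarrow> AE \<omega> in M. \<pi> a (X \<omega>) =
      real_cond_exp M (vimage_algebra (space M) X MX) (indicator {\<omega>\<in>space M. A \<omega> = a}) \<omega>"
  using assms unfolding nuisance_model_def by blast+

lemma nuisance_model_residual_orthogonal:
  assumes model: "nuisance_model M MX X A Y p mu \<pi>" and a: "a \<in> {1..p}"
    and [measurable]: "h \<in> borel_measurable MX"
    and int: "integrable M (\<lambda>\<omega>. of_bool (A \<omega> = a) * h (X \<omega>) * (Y \<omega> - mu a (X \<omega>)))"
  shows "(\<integral>\<omega>. of_bool (A \<omega> = a) * h (X \<omega>) * (Y \<omega> - mu a (X \<omega>)) \<partial>M) = 0"
proof -
  interpret prob_space M
    using model by (rule nuisance_modelD)
  have [measurable]: "X \<in> measurable M MX" "A \<in> measurable M (count_space UNIV)"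
    "Y \<in> borel_measurable M" "mu a \<in> borel_measurable MX"
    using nuisance_modelD[OF model] a by auto
  define F where "F = vimage_algebra (space M) (\<lambda>\<omega>. (X \<omega>, A \<omega>)) (MX \<Otimes>\<^sub>M count_space UNIV)"
  have XA: "(\<lambda>\<omega>. (X \<omega>, A \<omega>)) \<in> measurable M (MX \<Otimes>\<^sub>M count_space UNIV)"
    by measurable
  interpret F: sigma_finite_subalgebra M F
    unfolding F_def using XA by (rule sigma_finite_subalgebra_vimage_algebra)
  define k where "k \<omega> = of_bool (A \<omega> = a) * h (X \<omega>)" for \<omega>
  have k_F: "k \<in> borel_measurable F"
    using measurable_comp_vimage_algebra[OF XA, of "\<lambda>(x, b). of_bool (b = a) * h x" borel]
    unfolding k_def F_def by simp
  have [measurable]: "k \<in> borel_measurable M"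
    unfolding k_def by measurable
  have "AE \<omega> in M. k \<omega> * (Y \<omega> - mu a (X \<omega>)) = k \<omega> * (Y \<omega> - real_cond_exp M F Y \<omega>)"
    using nuisance_modelD(8)[OF model] unfolding F_def by eventually_elim (auto simp: k_def)
  moreover have "integrable M (\<lambda>\<omega>. k \<omega> * (Y \<omega> - mu a (X \<omega>)))"
    using int unfolding k_def .
  ultimately have "integrable M (\<lambda>\<omega>. k \<omega> * (Y \<omega> - real_cond_exp M F Y \<omega>))"
    and "(\<integral>\<omega>. k \<omega> * (Y \<omega> - mu a (X \<omega>)) \<partial>M) = (\<integral>\<omega>. k \<omega> * (Y \<omega> - real_cond_exp M F Y \<omega>) \<partial>M)"
    by (auto intro: integrable_cong_AE_imp integral_cong_AE)
  then show ?thesis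
    using F.real_cond_exp_residual_orthogonal[OF nuisance_modelD(5)[OF model] k_F]
    unfolding k_def by simp
qed

lemma nuisance_model_integral_propensity:
  assumes model: "nuisance_model M MX X A Y p mu \<pi>" and a: "a \<in> {1..p}"
    and [measurable]: "G \<in> borel_measurable MX"
    and int: "integrable M (\<lambda>\<omega>. of_bool (A \<omega> = a) * G (X \<omega>))"
  shows "integrable M (\<lambda>\<omega>. \<pi> a (X \<omega>) * G (X \<omega>))"
    and "(\<integral>\<omega>. \<pi> a (X \<omega>) * G (X \<omega>) \<partial>M) = (\<integral>\<omega>. of_bool (A \<omega> = a) * G (X \<omega>) \<partial>M)"
proof -
  interpret prob_space M
    using model by (rule nuisance_modelD)
  have X[measurable]: "X \<in> measurable M MX" and [measurable]: "A \<in> measurable M (count_space UNIV)"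
    "\<pi> a \<in> borel_measurable MX"
    using nuisance_modelD[OF model] a by auto
  define F where "F = vimage_algebra (space M) X MX"
  interpret F: sigma_finite_subalgebra M F
    unfolding F_def using X by (rule sigma_finite_subalgebra_vimage_algebra)
  define ind :: "'a \<Rightarrow> real" where "ind = indicator {\<omega>\<in>space M. A \<omega> = a}"
  have ind_eq: "G (X \<omega>) * ind \<omega> = of_bool (A \<omega> = a) * G (X \<omega>)" if "\<omega> \<in> space M" for \<omega>
    using that by (simp add: ind_def indicator_def)
  have int_ind: "integrable M (\<lambda>\<omega>. G (X \<omega>) * ind \<omega>)"
    using int by (subst Bochner_Integration.integrable_cong[OF refl ind_eq]) auto
  have G_F: "(\<lambda>\<omega>. G (X \<omega>)) \<in> borel_measurable F"
    unfolding F_def using X by (rule measurable_comp_vimage_algebra) measurable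
  have ind_measurable[measurable]: "ind \<in> borel_measurable M"
    unfolding ind_def by measurable
  note tower = F.real_cond_exp_intg[OF int_ind G_F ind_measurable]
  have ae: "AE \<omega> in M. G (X \<omega>) * real_cond_exp M F ind \<omega> = \<pi> a (X \<omega>) * G (X \<omega>)"
    using nuisance_modelD(9)[OF model a] unfolding F_def ind_def by eventually_elim simp
  show "integrable M (\<lambda>\<omega>. \<pi> a (X \<omega>) * G (X \<omega>))"
    using tower(1) by (rule integrable_cong_AE_imp[OF _ _ ae]) measurable
  have "(\<integral>\<omega>. \<pi> a (X \<omega>) * G (X \<omega>) \<partial>M) = (\<integral>\<omega>. G (X \<omega>) * real_cond_exp M F ind \<omega> \<partial>M)"
    by (rule integral_cong_AE[symmetric, OF _ _ ae]) measurable
  also have "\<dots> = (\<integral>\<omega>. G (X \<omega>) * ind \<omega> \<partial>M)"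
    by (rule tower(2))
  also have "\<dots> = (\<integral>\<omega>. of_bool (A \<omega> = a) * G (X \<omega>) \<partial>M)"
    by (rule Bochner_Integration.integral_cong) (simp_all add: ind_eq)
  finally show "(\<integral>\<omega>. \<pi> a (X \<omega>) * G (X \<omega>) \<partial>M) = (\<integral>\<omega>. of_bool (A \<omega> = a) * G (X \<omega>) \<partial>M)" .
qed

lemma nuisance_model_propensity_range:
  assumes model: "nuisance_model M MX X A Y p mu \<pi>" and a: "a \<in> {1..p}"
  shows "AE \<omega> in M. 0 \<le> \<pi> a (X \<omega>) \<and> \<pi> a (X \<omega>) \<le> 1"
proof -
  interpret prob_space M
    using model by (rule nuisance_modelD)
  have X[measurable]: "X \<in> measurable M MX" and [measurable]: "A \<in> measurable M (count_space UNIV)"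
    using nuisance_modelD[OF model] by auto
  define F where "F = vimage_algebra (space M) X MX"
  interpret F: sigma_finite_subalgebra M F
    unfolding F_def using X by (rule sigma_finite_subalgebra_vimage_algebra)
  define ind :: "'a \<Rightarrow> real" where "ind = indicator {\<omega>\<in>space M. A \<omega> = a}"
  have [measurable]: "ind \<in> borel_measurable M"
    unfolding ind_def by measurable
  have int_ind: "integrable M ind"
    by (rule integrable_const_bound[where B = 1]) (auto simp: ind_def)
  have "AE \<omega> in M. 0 \<le> real_cond_exp M F ind \<omega>"
    by (rule F.real_cond_exp_pos) (auto simp: ind_def)
  moreover have "AE \<omega> in M. real_cond_exp M F ind \<omega> \<le> real_cond_exp M F (\<lambda>_. 1) \<omega>"
    by (rule F.real_cond_exp_mono[OF _ int_ind]) (auto simp: ind_def)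
  moreover have "AE \<omega> in M. real_cond_exp M F (\<lambda>_. 1) \<omega> = 1"
    by (rule F.real_cond_exp_F_meas) auto
  ultimately show ?thesis
    using nuisance_modelD(9)[OF model a] unfolding F_def ind_def by eventually_elim auto
qed

text \<open>phi2_correction_mean is E(2 muh_a(X) 1(A = a) / \<pi>h_a(X) (Y - muh_a(X)) | X, A = a), and
  phi2_cond_bias is E(phi2(\<eta>h) - phi2(\<eta>) | X).\<close>

definition phi2_correction_mean ::
  "(nat \<Rightarrow> 'x \<Rightarrow> real) \<Rightarrow> (nat \<Rightarrow> 'x \<Rightarrow> real) \<Rightarrow> (nat \<Rightarrow> 'x \<Rightarrow> real) \<Rightarrow> nat \<Rightarrow> 'x \<Rightarrow> real" where
  "phi2_correction_mean \<pi>h muh mu a x = 2 * (muh a x / \<pi>h a x) * (mu a x - muh a x)"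

definition phi2_cond_bias ::
  "(nat \<Rightarrow> 'x \<Rightarrow> real) \<Rightarrow> (nat \<Rightarrow> 'x \<Rightarrow> real) \<Rightarrow> (nat \<Rightarrow> 'x \<Rightarrow> real) \<Rightarrow> (nat \<Rightarrow> 'x \<Rightarrow> real)
    \<Rightarrow> nat \<Rightarrow> 'x \<Rightarrow> real" where
  "phi2_cond_bias \<pi>h muh \<pi> mu a x =
     \<pi> a x * phi2_correction_mean \<pi>h muh mu a x + ((muh a x)\<^sup>2 - (mu a x)\<^sup>2)"

lemma phi2_diff_eq:
  "phi2 \<pi>h muh a y aa x - phi2 \<pi> mu a y aa x =
     2 * (of_bool (aa = a) * (muh a x / \<pi>h a x - mu a x / \<pi> a x) * (y - mu a x))
     + (of_bool (aa = a) * phi2_correction_mean \<pi>h muh mu a x + ((muh a x)\<^sup>2 - (mu a x)\<^sup>2))"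
  unfolding phi2_def phi2_correction_mean_def
  by (cases "aa = a") (simp_all add: divide_inverse power2_eq_square algebra_simps)

lemma abs_phi2_correction_mean_le:
  fixes B \<epsilon> :: real
  assumes "\<bar>mu a x\<bar> \<le> B" "\<bar>muh a x\<bar> \<le> B" "\<epsilon> \<le> \<pi>h a x" "0 < \<epsilon>"
  shows "\<bar>phi2_correction_mean \<pi>h muh mu a x\<bar> \<le> 4 * B\<^sup>2 / \<epsilon>"
proof -
  have "\<bar>muh a x / \<pi>h a x\<bar> \<le> B / \<epsilon>"
    using assms by (simp add: abs_divide frac_le)
  moreover have "\<bar>mu a x - muh a x\<bar> \<le> 2 * B"
    using assms by linarith
  moreover have "0 \<le> B"
    using assms(1) by linarith
  ultimately have "\<bar>phi2_correction_mean \<pi>h muh mu a x\<bar> \<le> 2 * (B / \<epsilon>) * (2 * B)"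
    unfolding phi2_correction_mean_def abs_mult using assms(4) by (intro mult_mono mult_left_mono) auto
  then show ?thesis
    by (simp add: power2_eq_square)
qed

lemma phi2_cond_bias_le:
  fixes B \<epsilon> :: real
  assumes "\<bar>mu a x\<bar> \<le> B" "\<bar>muh a x\<bar> \<le> B" "\<epsilon> \<le> \<pi>h a x" "0 < \<epsilon>"
  shows "phi2_cond_bias \<pi>h muh \<pi> mu a x
    \<le> 2 * B / \<epsilon> * (\<bar>muh a x - mu a x\<bar> * \<bar>\<pi>h a x - \<pi> a x\<bar>)"
proof -
  let ?d = "muh a x - mu a x" and ?r = "muh a x / \<pi>h a x" and ?e = "\<pi>h a x - \<pi> a x"
  have "\<pi>h a x \<noteq> 0"
    using assms by linarith
  then have "phi2_cond_bias \<pi>h muh \<pi> mu a x = - ?d\<^sup>2 + 2 * ?d * ?r * ?e"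
    unfolding phi2_cond_bias_def phi2_correction_mean_def
    by (simp add: field_simps power2_eq_square)
  also have "\<dots> \<le> \<bar>2 * ?d * ?r * ?e\<bar>"
    using abs_ge_self[of "2 * ?d * ?r * ?e"] zero_le_power2[of ?d] by linarith
  also have "\<dots> = 2 * \<bar>muh a x - mu a x\<bar> * \<bar>muh a x / \<pi>h a x\<bar> * \<bar>\<pi>h a x - \<pi> a x\<bar>"
    unfolding abs_mult by simp
  also have "\<dots> \<le> 2 * \<bar>muh a x - mu a x\<bar> * (B / \<epsilon>) * \<bar>\<pi>h a x - \<pi> a x\<bar>"
    using assms by (intro mult_right_mono mult_left_mono) (simp_all add: abs_divide frac_le)
  finally show ?thesis
    by (simp add: field_simps)
qed

locale phi2_estimation =
  fixes M :: "'w measure" and MX :: "'x measure" and X :: "'w \<Rightarrow> 'x" and A :: "'w \<Rightarrow> nat"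
    and Y :: "'w \<Rightarrow> real" and p :: nat and mu \<pi> muh \<pi>h :: "nat \<Rightarrow> 'x \<Rightarrow> real"
    and a :: nat and B \<epsilon> :: real
  assumes model: "nuisance_model M MX X A Y p mu \<pi>"
    and arm: "a \<in> {1..p}"
    and muh_measurable: "muh a \<in> borel_measurable MX"
    and \<pi>h_measurable: "\<pi>h a \<in> borel_measurable MX"
    and bounded: "AE \<omega> in M. \<bar>mu a (X \<omega>)\<bar> \<le> B \<and> \<bar>muh a (X \<omega>)\<bar> \<le> B"
    and overlap: "AE \<omega> in M. \<epsilon> \<le> \<pi>h a (X \<omega>) \<and> \<pi>h a (X \<omega>) \<le> 1 - \<epsilon>"
    and eps_pos: "0 < \<epsilon>"
begin

sublocale prob_space M
  using model by (rule nuisance_modelD)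

lemmas [measurable] = muh_measurable \<pi>h_measurable
  nuisance_modelD(2-4)[OF model] nuisance_modelD(6,7)[OF model arm]

lemma bound_nonneg: "0 \<le> B"
proof -
  have "AE \<omega> in M. 0 \<le> B"
    using bounded by eventually_elim auto
  then show ?thesis
    by simp
qed

lemma borel_measurable_phi2_correction_mean [measurable]:
  "phi2_correction_mean \<pi>h muh mu a \<in> borel_measurable MX"
  unfolding phi2_correction_mean_def by measurable

lemma integrable_phi2_bias_parts:
  shows "integrable M (\<lambda>\<omega>. of_bool (A \<omega> = a) * phi2_correction_mean \<pi>h muh mu a (X \<omega>))"
    and "integrable M (\<lambda>\<omega>. (muh a (X \<omega>))\<^sup>2 - (mu a (X \<omega>))\<^sup>2)"
proof -
  show "integrable M (\<lambda>\<omega>. of_bool (A \<omega> = a) * phi2_correction_mean \<pi>h muh mu a (X \<omega>))"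
  proof (rule integrable_const_bound[where B = "4 * B\<^sup>2 / \<epsilon>"])
    show "AE \<omega> in M. norm (of_bool (A \<omega> = a) * phi2_correction_mean \<pi>h muh mu a (X \<omega>)) \<le> 4 * B\<^sup>2 / \<epsilon>"
      using bounded overlap
    proof eventually_elim
      case (elim \<omega>)
      then have "\<bar>phi2_correction_mean \<pi>h muh mu a (X \<omega>)\<bar> \<le> 4 * B\<^sup>2 / \<epsilon>"
        using eps_pos by (intro abs_phi2_correction_mean_le) auto
      moreover have "0 \<le> 4 * B\<^sup>2 / \<epsilon>"
        using eps_pos by simp
      ultimately show ?case
        by simp
    qed
  qed measurable
  show "integrable M (\<lambda>\<omega>. (muh a (X \<omega>))\<^sup>2 - (mu a (X \<omega>))\<^sup>2)"
  proof (rule integrable_const_bound[where B = "B\<^sup>2"])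
    show "AE \<omega> in M. norm ((muh a (X \<omega>))\<^sup>2 - (mu a (X \<omega>))\<^sup>2) \<le> B\<^sup>2"
      using bounded
    proof eventually_elim
      case (elim \<omega>)
      then have "(muh a (X \<omega>))\<^sup>2 \<le> B\<^sup>2" "(mu a (X \<omega>))\<^sup>2 \<le> B\<^sup>2"
        using bound_nonneg by (simp_all flip: abs_le_square_iff)
      then show ?case
        using zero_le_power2[of "muh a (X \<omega>)"] zero_le_power2[of "mu a (X \<omega>)"]
        unfolding real_norm_def abs_le_iff by linarith
    qed
  qed measurable
qed

lemma integrable_phi2_cond_bias: "integrable M (\<lambda>\<omega>. phi2_cond_bias \<pi>h muh \<pi> mu a (X \<omega>))"
  unfolding phi2_cond_bias_def
  using nuisance_model_integral_propensity(1)[OF model arm _ integrable_phi2_bias_parts(1)]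
    integrable_phi2_bias_parts(2)
  by (intro Bochner_Integration.integrable_add) measurable


lemma integral_phi2_diff_eq_cond_bias:
  assumes int: "integrable M (\<lambda>\<omega>. phi2 \<pi>h muh a (Y \<omega>) (A \<omega>) (X \<omega>) - phi2 \<pi> mu a (Y \<omega>) (A \<omega>) (X \<omega>))"
  shows "(\<integral>\<omega>. phi2 \<pi>h muh a (Y \<omega>) (A \<omega>) (X \<omega>) - phi2 \<pi> mu a (Y \<omega>) (A \<omega>) (X \<omega>) \<partial>M)
    = (\<integral>\<omega>. phi2_cond_bias \<pi>h muh \<pi> mu a (X \<omega>) \<partial>M)"
proof -
  define h where "h x = muh a x / \<pi>h a x - mu a x / \<pi> a x" for x
  define r where "r \<omega> = of_bool (A \<omega> = a) * h (X \<omega>) * (Y \<omega> - mu a (X \<omega>))" for \<omega>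
  define b where "b \<omega> = of_bool (A \<omega> = a) * phi2_correction_mean \<pi>h muh mu a (X \<omega>)
    + ((muh a (X \<omega>))\<^sup>2 - (mu a (X \<omega>))\<^sup>2)" for \<omega>
  have diff_eq: "phi2 \<pi>h muh a (Y \<omega>) (A \<omega>) (X \<omega>) - phi2 \<pi> mu a (Y \<omega>) (A \<omega>) (X \<omega>) = 2 * r \<omega> + b \<omega>"
    for \<omega>
    unfolding r_def b_def h_def by (rule phi2_diff_eq)
  note parts = integrable_phi2_bias_parts
  have int_b: "integrable M b"
    unfolding b_def using parts by (rule Bochner_Integration.integrable_add)
  have "integrable M (\<lambda>\<omega>. (2 * r \<omega> + b \<omega>) - b \<omega>)"
    using int int_b unfolding diff_eq by (rule Bochner_Integration.integrable_diff)
  then have int_r: "integrable M r"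
    by simp
  have [measurable]: "h \<in> borel_measurable MX"
    unfolding h_def by measurable
  have "integral\<^sup>L M r = 0"
    using nuisance_model_residual_orthogonal[OF model arm _ int_r[unfolded r_def]]
    unfolding r_def by simp
  then have "(\<integral>\<omega>. 2 * r \<omega> + b \<omega> \<partial>M) = (\<integral>\<omega>. of_bool (A \<omega> = a) * phi2_correction_mean \<pi>h muh mu a (X \<omega>) \<partial>M)
      + (\<integral>\<omega>. (muh a (X \<omega>))\<^sup>2 - (mu a (X \<omega>))\<^sup>2 \<partial>M)"
    using int_r int_b parts unfolding b_def by simp
  also have "\<dots> = (\<integral>\<omega>. phi2_cond_bias \<pi>h muh \<pi> mu a (X \<omega>) \<partial>M)"
    using nuisance_model_integral_propensity[OF model arm _ parts(1)] parts(2)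
    unfolding phi2_cond_bias_def by simp
  finally show ?thesis
    unfolding diff_eq .
qed

lemma square_integrable_errors:
  shows "integrable M (\<lambda>\<omega>. (muh a (X \<omega>) - mu a (X \<omega>))\<^sup>2)"
    and "integrable M (\<lambda>\<omega>. (\<pi>h a (X \<omega>) - \<pi> a (X \<omega>))\<^sup>2)"
proof -
  show "integrable M (\<lambda>\<omega>. (muh a (X \<omega>) - mu a (X \<omega>))\<^sup>2)"
  proof (rule integrable_const_bound[where B = "(2 * B)\<^sup>2"])
    show "AE \<omega> in M. norm ((muh a (X \<omega>) - mu a (X \<omega>))\<^sup>2) \<le> (2 * B)\<^sup>2"
      using bounded
    proof eventually_elim
      case (elim \<omega>)
      then have "\<bar>muh a (X \<omega>) - mu a (X \<omega>)\<bar> \<le> \<bar>2 * B\<bar>"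
        by arith
      then show ?case
        by (simp only: real_norm_def abs_power2 abs_le_square_iff)
    qed
  qed measurable
  show "integrable M (\<lambda>\<omega>. (\<pi>h a (X \<omega>) - \<pi> a (X \<omega>))\<^sup>2)"
  proof (rule integrable_const_bound[where B = 1])
    show "AE \<omega> in M. norm ((\<pi>h a (X \<omega>) - \<pi> a (X \<omega>))\<^sup>2) \<le> 1"
      using overlap nuisance_model_propensity_range[OF model arm]
    proof eventually_elim
      case (elim \<omega>)
      then have "\<bar>\<pi>h a (X \<omega>) - \<pi> a (X \<omega>)\<bar> \<le> 1"
        using eps_pos by arith
      then show ?case
        using power_le_one[OF abs_ge_zero, of "\<pi>h a (X \<omega>) - \<pi> a (X \<omega>)" 2] by simp
    qed
  qed measurable
qed

lemma integral_phi2_cond_bias_le: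
  "(\<integral>\<omega>. phi2_cond_bias \<pi>h muh \<pi> mu a (X \<omega>) \<partial>M)
    \<le> 2 * B / \<epsilon> * (L2X M X (\<lambda>x. muh a x - mu a x) * L2X M X (\<lambda>x. \<pi>h a x - \<pi> a x))"
proof -
  define d where "d \<omega> = muh a (X \<omega>) - mu a (X \<omega>)" for \<omega>
  define e where "e \<omega> = \<pi>h a (X \<omega>) - \<pi> a (X \<omega>)" for \<omega>
  have [measurable]: "d \<in> borel_measurable M" "e \<in> borel_measurable M"
    unfolding d_def e_def by measurable
  have int_d2: "integrable M (\<lambda>\<omega>. (d \<omega>)\<^sup>2)" and int_e2: "integrable M (\<lambda>\<omega>. (e \<omega>)\<^sup>2)"
    unfolding d_def e_def by (fact square_integrable_errors)+
  have "(\<integral>\<omega>. phi2_cond_bias \<pi>h muh \<pi> mu a (X \<omega>) \<partial>M) \<le> (\<integral>\<omega>. 2 * B / \<epsilon> * (\<bar>d \<omega>\<bar> * \<bar>e \<omega>\<bar>) \<partial>M)"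
  proof (rule integral_mono_AE[OF integrable_phi2_cond_bias])
    show "integrable M (\<lambda>\<omega>. 2 * B / \<epsilon> * (\<bar>d \<omega>\<bar> * \<bar>e \<omega>\<bar>))"
      using integrable_abs_mult_of_square_integrable[OF _ _ int_d2 int_e2] by simp
    show "AE \<omega> in M. phi2_cond_bias \<pi>h muh \<pi> mu a (X \<omega>) \<le> 2 * B / \<epsilon> * (\<bar>d \<omega>\<bar> * \<bar>e \<omega>\<bar>)"
      using bounded overlap unfolding d_def e_def
    proof eventually_elim
      case (elim \<omega>)
      then show ?case
        using eps_pos by (intro phi2_cond_bias_le) auto
    qed
  qed
  also have "\<dots> = 2 * B / \<epsilon> * (\<integral>\<omega>. \<bar>d \<omega>\<bar> * \<bar>e \<omega>\<bar> \<partial>M)"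
    by simp
  also have "\<dots> \<le> 2 * B / \<epsilon> * (sqrt (\<integral>\<omega>. (d \<omega>)\<^sup>2 \<partial>M) * sqrt (\<integral>\<omega>. (e \<omega>)\<^sup>2 \<partial>M))"
    using Cauchy_Schwarz_integral[OF _ _ int_d2 int_e2] bound_nonneg eps_pos
    by (intro mult_left_mono) auto
  finally show ?thesis
    unfolding L2X_def d_def e_def .
qed

lemma integral_phi2_diff_le:
  "(\<integral>\<omega>. phi2 \<pi>h muh a (Y \<omega>) (A \<omega>) (X \<omega>) - phi2 \<pi> mu a (Y \<omega>) (A \<omega>) (X \<omega>) \<partial>M)
    \<le> 2 * B / \<epsilon> * L2X M X (\<lambda>x. muh a x - mu a x)
      * (L2X M X (\<lambda>x. muh a x - mu a x) + L2X M X (\<lambda>x. \<pi>h a x - \<pi> a x))"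
proof (cases "integrable M (\<lambda>\<omega>. phi2 \<pi>h muh a (Y \<omega>) (A \<omega>) (X \<omega>) - phi2 \<pi> mu a (Y \<omega>) (A \<omega>) (X \<omega>))")
  case True
  then have "(\<integral>\<omega>. phi2 \<pi>h muh a (Y \<omega>) (A \<omega>) (X \<omega>) - phi2 \<pi> mu a (Y \<omega>) (A \<omega>) (X \<omega>) \<partial>M)
      \<le> 2 * B / \<epsilon> * (L2X M X (\<lambda>x. muh a x - mu a x) * L2X M X (\<lambda>x. \<pi>h a x - \<pi> a x))"
    using integral_phi2_cond_bias_le by (simp add: integral_phi2_diff_eq_cond_bias)
  also have "\<dots> \<le> 2 * B / \<epsilon> * L2X M X (\<lambda>x. muh a x - mu a x)
      * (L2X M X (\<lambda>x. muh a x - mu a x) + L2X M X (\<lambda>x. \<pi>h a x - \<pi> a x))"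
    using bound_nonneg eps_pos L2X_nonneg[of M X "\<lambda>x. muh a x - mu a x"]
    by (simp add: algebra_simps mult_left_mono)
  finally show ?thesis .
next
  case False
  \<comment> \<open>a non-integrable function has Bochner integral 0\<close>
  then show ?thesis
    using bound_nonneg eps_pos by (simp add: not_integrable_integral_eq L2X_nonneg)
qed

end

theorem lemmaA6:
  fixes B \<epsilon> :: real
  assumes "\<epsilon> > 0"
  shows "\<exists>C. \<forall>(M :: 'w measure) (MX :: 'x measure) X A Y p mu \<pi> muh \<pi>h a.
    nuisance_model M MX X A Y p mu \<pi> \<and>
    (\<forall>a\<in>{1..p}. muh a \<in> borel_measurable MX \<and> \<pi>h a \<in> borel_measurable MX) \<and>
    (\<forall>a\<in>{1..p}. AE \<omega> in M. \<bar>mu a (X \<omega>)\<bar> \<le> B \<and> \<bar>muh a (X \<omega>)\<bar> \<le> B) \<and>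
    (\<forall>a\<in>{1..p}. AE \<omega> in M. \<epsilon> \<le> \<pi>h a (X \<omega>) \<and> \<pi>h a (X \<omega>) \<le> 1 - \<epsilon>) \<and>
    a \<in> {1..p}
    \<longrightarrow> (\<integral>\<omega>. phi2 \<pi>h muh a (Y \<omega>) (A \<omega>) (X \<omega>) - phi2 \<pi> mu a (Y \<omega>) (A \<omega>) (X \<omega>) \<partial>M)
        \<le> C * L2X M X (\<lambda>x. muh a x - mu a x)
              * (L2X M X (\<lambda>x. muh a x - mu a x) + L2X M X (\<lambda>x. \<pi>h a x - \<pi> a x))"
proof (intro exI[of _ "2 * B / \<epsilon>"] allI impI, elim conjE)
  fix M :: "'w measure" and MX :: "'x measure" and X A Y p mu \<pi> muh \<pi>h a
  assume "nuisance_model M MX X A Y p mu \<pi>"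
    and "\<forall>a\<in>{1..p}. muh a \<in> borel_measurable MX \<and> \<pi>h a \<in> borel_measurable MX"
    and "\<forall>a\<in>{1..p}. AE \<omega> in M. \<bar>mu a (X \<omega>)\<bar> \<le> B \<and> \<bar>muh a (X \<omega>)\<bar> \<le> B"
    and "\<forall>a\<in>{1..p}. AE \<omega> in M. \<epsilon> \<le> \<pi>h a (X \<omega>) \<and> \<pi>h a (X \<omega>) \<le> 1 - \<epsilon>"
    and "a \<in> {1..p}"
  then interpret phi2_estimation M MX X A Y p mu \<pi> muh \<pi>h a B \<epsilon>
    using assms by unfold_locales auto
  show "(\<integral>\<omega>. phi2 \<pi>h muh a (Y \<omega>) (A \<omega>) (X \<omega>) - phi2 \<pi> mu a (Y \<omega>) (A \<omega>) (X \<omega>) \<partial>M)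
    \<le> 2 * B / \<epsilon> * L2X M X (\<lambda>x. muh a x - mu a x)
      * (L2X M X (\<lambda>x. muh a x - mu a x) + L2X M X (\<lambda>x. \<pi>h a x - \<pi> a x))"
    by (rule integral_phi2_diff_le)
qed

end
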